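(* Let $M$ be a non-negative $n\times n$ matrix having at least one positive diagonal, and for $\lambda>0$ let $M^{(\lambda)}$ be the limit of Sinkhorn scaling of $M^{[\lambda]}$ with uniform marginals $\mathbf{r}=\mathbf{c}=(1/n,\dots,1/n)$. Then $M^{(\lambda)}$ concentrates on the leading diagonals of $M$ as $\lambda\to\infty$: for every position $(s,t)$ such that $M_{st}$ does not lie on any leading diagonal of $M$ (i.e. there is no leading diagonal $D^M_\sigma$ with $\sigma(s)=t$), $M^{(\lambda)}_{st}\to0$ as $\lambda\to\infty$.
   Context: $M^{[\lambda]}$ denotes the matrix with entries $(M_{ij})^\lambda$ (zero where $M_{ij}=0$). Sinkhorn scaling with marginals $(\mathbf{r},\mathbf{c})$ is the iterated alternation of rescaling rows to have sums $\mathbf{r}$ and columns to have sums $\mathbf{c}$. For a permutation $\sigma$ of $\{1,\dots,n\}$, the diagonal of $M$ determined by $\sigma$ is $D^M_\sigma=\{M_{1\sigma(1)},\dots,M_{n\sigma(n)}\}$; it is positive if all its entries are positive; it is a leading diagonal if the product $\prod_{i=1}^n M_{i\sigma(i)}$ is the largest among all diagonals of $M$. *)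

theory Defs
  imports "HOL-Analysis.Analysis" "HOL-Combinatorics.Permutations"
begin

definition entry_power :: "real \<Rightarrow> real^'n^'n \<Rightarrow> real^'n^'n" where
  "entry_power l M = (\<chi> i j. (M $ i $ j) powr l)"
  \<comment> \<open>M^[l]; note 0 powr l = 0, so zeros stay zero\<close>

definition row_scale :: "real^'n \<Rightarrow> real^'n^'n \<Rightarrow> real^'n^'n" where
  "row_scale r A = (\<chi> i j. A $ i $ j * r $ i / (\<Sum>k\<in>UNIV. A $ i $ k))"

definition col_scale :: "real^'n \<Rightarrow> real^'n^'n \<Rightarrow> real^'n^'n" where
  "col_scale c A = (\<chi> i j. A $ i $ j * c $ j / (\<Sum>k\<in>UNIV. A $ k $ j))"

fun sinkhorn_iter :: "real^'n \<Rightarrow> real^'n \<Rightarrow> real^'n^'n \<Rightarrow> nat \<Rightarrow> real^'n^'n" where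
  "sinkhorn_iter r c A 0 = A"
| "sinkhorn_iter r c A (Suc k) =
     (if even k then row_scale r (sinkhorn_iter r c A k)
      else col_scale c (sinkhorn_iter r c A k))"

definition sinkhorn_limit :: "real^'n \<Rightarrow> real^'n \<Rightarrow> real^'n^'n \<Rightarrow> real^'n^'n" where
  "sinkhorn_limit r c A = lim (sinkhorn_iter r c A)"

definition uniform_marginal :: "real^'n" where
  "uniform_marginal = (\<chi> i. 1 / real CARD('n))"

definition diag_prod :: "real^'n^'n \<Rightarrow> ('n \<Rightarrow> 'n) \<Rightarrow> real" where
  "diag_prod M \<sigma> = (\<Prod>i\<in>UNIV. M $ i $ \<sigma> i)"

definition positive_diagonal :: "real^'n^'n \<Rightarrow> ('n \<Rightarrow> 'n) \<Rightarrow> bool" where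
  "positive_diagonal M \<sigma> \<longleftrightarrow> \<sigma> permutes UNIV \<and> (\<forall>i. M $ i $ \<sigma> i > 0)"

definition leading_diagonal :: "real^'n^'n \<Rightarrow> ('n \<Rightarrow> 'n) \<Rightarrow> bool" where
  "leading_diagonal M \<sigma> \<longleftrightarrow> \<sigma> permutes UNIV \<and>
     (\<forall>\<tau>. \<tau> permutes UNIV \<longrightarrow> diag_prod M \<tau> \<le> diag_prod M \<sigma>)"

end

(*
  Sinkhorn iterates P_k of a nonnegative matrix A with a positive diagonal are diagonal scalings
  of A. For every coupling Q with uniform marginals and support inside that of A, the weighted
  log-likelihood sum_ij Q_ij ln P_k(i,j) increases at each step by an amount independent of Q,
  which dominates the squared Hellinger defect of the current marginals; since the log-likelihood
  stays below 0, the marginals become uniform. Choosing Q to be a limit point L of the iteration,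
  the log-likelihood of L increases to the entropy term of L, and the Hellinger bound forces
  P_k --> L. As a limit of diagonal scalings, L multiplies products along two partial diagonals
  through the same rows and columns in the same ratio as A does.

  For A = M^[lambda] that ratio is (prod M_tau / prod M_sigma)^lambda. If the entry (s,t) of the
  limit does not vanish as lambda --> oo, compactness gives a limit point B of these limits which
  is a uniform coupling with B_st > 0. As B has equal row and column sums, a cycle of positive
  entries of B passes through (s,t); splicing it into a leading diagonal sigma gives a diagonal tau
  through (s,t). Since tau is not leading, the ratio drives the entries along the cycle to 0,
  contradicting their positivity in B.
*)
theory Submission
  imports Defs "HOL-Library.Transitive_Closure_Table" "HOL-Combinatorics.Cycles"
begin

lemma sqrt_diff_sq_le_relative_entropy_term:
  fixes p q :: real
  assumes "0 < p" "0 < q"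
  shows "(sqrt p - sqrt q)\<^sup>2 + p - q \<le> p * (ln p - ln q)"
proof -
  define a b where "a = sqrt p" and "b = sqrt q"
  have a: "0 < a" "a\<^sup>2 = p" and b: "0 < b" "b\<^sup>2 = q"
    using assms unfolding a_def b_def by auto
  have "ln (b / a) \<le> b / a - 1"
    using a b by (intro ln_le_minus_one) simp
  moreover have "ln p - ln q = 2 * ln a - 2 * ln b"
    using ln_realpow[of a 2] ln_realpow[of b 2] a(2) b(2) by simp
  moreover have "ln (b / a) = ln b - ln a"
    using a(1) b(1) by (simp add: ln_div)
  ultimately have "p * (2 - 2 * (b / a)) \<le> p * (ln p - ln q)"
    using assms by (intro mult_left_mono) auto
  moreover have "p * (2 - 2 * (b / a)) = (sqrt p - sqrt q)\<^sup>2 + p - q"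
    using a b unfolding a_def[symmetric] b_def[symmetric]
    by (simp add: power2_eq_square field_simps)
  ultimately show ?thesis by simp
qed

lemma hellinger_le_relative_entropy:
  fixes p q :: "'a \<Rightarrow> real"
  assumes "finite I" and "\<And>x. x \<in> I \<Longrightarrow> 0 \<le> p x" and "\<And>x. x \<in> I \<Longrightarrow> 0 \<le> q x"
    and "\<And>x. x \<in> I \<Longrightarrow> 0 < p x \<Longrightarrow> 0 < q x" and "sum p I = sum q I"
  shows "(\<Sum>x\<in>I. (sqrt (p x) - sqrt (q x))\<^sup>2)
           \<le> (\<Sum>x\<in>I. if 0 < p x then p x * (ln (p x) - ln (q x)) else 0)"
proof -
  have "(\<Sum>x\<in>I. (sqrt (p x) - sqrt (q x))\<^sup>2) = (\<Sum>x\<in>I. (sqrt (p x) - sqrt (q x))\<^sup>2 + p x - q x)"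
    using assms(5) by (simp add: sum.distrib sum_subtractf)
  also have "\<dots> \<le> (\<Sum>x\<in>I. if 0 < p x then p x * (ln (p x) - ln (q x)) else 0)"
  proof (rule sum_mono)
    fix x assume "x \<in> I"
    then show "(sqrt (p x) - sqrt (q x))\<^sup>2 + p x - q x
                 \<le> (if 0 < p x then p x * (ln (p x) - ln (q x)) else 0)"
      using assms(2-4)[of x] sqrt_diff_sq_le_relative_entropy_term[of "p x" "q x"]
      by (cases "0 < p x") (auto simp: power2_eq_square)
  qed
  finally show ?thesis .
qed

lemma sqrt_sub_one_sq_le_neg_sum_ln:
  fixes x :: "'a::finite \<Rightarrow> real"
  assumes "\<And>i. 0 < x i" and "(\<Sum>i\<in>UNIV. x i) = real CARD('a)"
  shows "(sqrt (x i) - 1)\<^sup>2 \<le> - (\<Sum>i\<in>UNIV. ln (x i))"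
proof -
  have "(sqrt (x i) - 1)\<^sup>2 \<le> (\<Sum>i\<in>UNIV. (sqrt 1 - sqrt (x i))\<^sup>2)"
    using member_le_sum[of i UNIV "\<lambda>i. (sqrt 1 - sqrt (x i))\<^sup>2"] by (simp add: power2_commute)
  also have "\<dots> \<le> (\<Sum>i\<in>UNIV. if 0 < (1::real) then 1 * (ln 1 - ln (x i)) else 0)"
    using assms by (intro hellinger_le_relative_entropy) (auto simp: less_imp_le)
  also have "\<dots> = - (\<Sum>i\<in>UNIV. ln (x i))"
    by (simp add: sum_negf)
  finally show ?thesis .
qed

lemma tendsto_of_sqrt_diff_sq_le:
  fixes z e :: "'a \<Rightarrow> real"
  assumes "\<forall>\<^sub>F k in F. 0 \<le> z k" and "0 \<le> c"
    and "\<forall>\<^sub>F k in F. (sqrt (z k) - sqrt c)\<^sup>2 \<le> e k" and "(e \<longlongrightarrow> 0) F"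
  shows "(z \<longlongrightarrow> c) F"
proof -
  have "((\<lambda>k. (sqrt (z k) - sqrt c)\<^sup>2) \<longlongrightarrow> 0) F"
    by (rule tendsto_sandwich[of "\<lambda>_. 0" _ _ e]) (use assms(3,4) in auto)
  then have "((\<lambda>k. sqrt ((sqrt (z k) - sqrt c)\<^sup>2)) \<longlongrightarrow> sqrt 0) F"
    by (rule tendsto_real_sqrt)
  then have "((\<lambda>k. sqrt (z k) - sqrt c) \<longlongrightarrow> 0) F"
    by (simp add: tendsto_rabs_zero_iff)
  then have "((\<lambda>k. sqrt (z k)) \<longlongrightarrow> sqrt c) F"
    by (simp add: LIM_zero_iff)
  then have "((\<lambda>k. (sqrt (z k))\<^sup>2) \<longlongrightarrow> (sqrt c)\<^sup>2) F"
    by (rule tendsto_power)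
  then have "((\<lambda>k. (sqrt (z k))\<^sup>2) \<longlongrightarrow> c) F"
    using assms(2) by simp
  moreover have "\<forall>\<^sub>F k in F. (sqrt (z k))\<^sup>2 = z k"
    using assms(1) by (rule eventually_mono) simp
  ultimately show ?thesis
    by (rule Lim_transform_eventually)
qed

lemma incseq_tendsto_of_subseq:
  fixes X :: "nat \<Rightarrow> real"
  assumes "incseq X" and "strict_mono r" and "(X \<circ> r) \<longlonglongrightarrow> l"
  shows "X \<longlonglongrightarrow> l"
proof -
  have "X n \<le> l" for n
  proof -
    have "incseq (X \<circ> r)"
      using assms(1,2) by (simp add: incseq_def strict_mono_leD)
    then have "X (r n) \<le> l"
      using incseq_le[OF _ assms(3)] by (simp add: comp_def)
    then show ?thesis
      using assms(1) seq_suble[OF assms(2)] by (meson incseqD order_trans)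
  qed
  then obtain l' where "X \<longlonglongrightarrow> l'"
    using incseq_convergent[OF assms(1)] by metis
  moreover have "l' = l"
    using LIMSEQ_unique[OF LIMSEQ_subseq_LIMSEQ[OF \<open>X \<longlonglongrightarrow> l'\<close> assms(2)] assms(3)] .
  ultimately show ?thesis by simp
qed

lemma powr_tendsto_zero_at_top:
  fixes q :: real
  assumes "0 \<le> q" and "q < 1"
  shows "((\<lambda>l. q powr l) \<longlongrightarrow> 0) at_top"
proof (cases "q = 0")
  case False
  have "filterlim (\<lambda>l. ln q * l) at_bot at_top"
    using assms False by (intro filterlim_tendsto_neg_mult_at_bot[OF tendsto_const] filterlim_ident) simp_all
  then have "((\<lambda>l. exp (ln q * l)) \<longlongrightarrow> 0) at_top"
    by (rule filterlim_compose[OF exp_at_bot])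
  then show ?thesis
    using False by (simp add: powr_def mult.commute)
qed simp

lemma limit_point_of_not_tendsto_at_top:
  fixes B :: "real \<Rightarrow> 'a::metric_space" and g :: "'a \<Rightarrow> 'b::metric_space"
  assumes "compact K" and "\<And>l. B l \<in> K" and "continuous_on K g"
    and "\<not> ((\<lambda>l. g (B l)) \<longlongrightarrow> c) at_top"
  shows "\<exists>ls L. filterlim ls at_top sequentially \<and> (\<lambda>m. B (ls m)) \<longlonglongrightarrow> L \<and> L \<in> K \<and> g L \<noteq> c"
proof -
  obtain \<epsilon> where "0 < \<epsilon>" and freq: "\<not> (\<forall>\<^sub>F l in at_top. dist (g (B l)) c < \<epsilon>)"
    using assms(4) unfolding tendsto_iff by blast
  have "\<exists>l. real m \<le> l \<and> \<epsilon> \<le> dist (g (B l)) c" for m :: nat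
    using freq unfolding eventually_at_top_linorder by (meson not_le)
  then obtain l where l: "\<And>m. real m \<le> l m" "\<And>m. \<epsilon> \<le> dist (g (B (l m))) c"
    by metis
  obtain L r where "L \<in> K" and r: "strict_mono r" and lim: "(B \<circ> l \<circ> r) \<longlonglongrightarrow> L"
    using seq_compactE[OF compact_imp_seq_compact[OF assms(1)], of "B \<circ> l"] assms(2) by auto
  have "filterlim (l \<circ> r) at_top sequentially"
  proof (rule filterlim_at_top_mono[OF filterlim_real_sequentially])
    have "real m \<le> l (r m)" for m
      using l(1)[of "r m"] seq_suble[OF r, of m] by (meson of_nat_le_iff order_trans)
    then show "\<forall>\<^sub>F m in sequentially. real m \<le> (l \<circ> r) m"
      by (simp add: always_eventually)
  qed
  moreover have "(\<lambda>m. g (B (l (r m)))) \<longlonglongrightarrow> g L"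
    using continuous_on_tendsto_compose[OF assms(3) lim \<open>L \<in> K\<close>] assms(2)
    by (simp add: comp_def)
  then have "\<epsilon> \<le> dist (g L) c"
    using l(2) by (intro tendsto_le[OF _ tendsto_dist tendsto_const]) auto
  ultimately show ?thesis
    using lim \<open>L \<in> K\<close> \<open>0 < \<epsilon>\<close> by (intro exI[of _ "l \<circ> r"] exI[of _ L]) (auto simp: comp_def)
qed

section \<open>Cycles in balanced flows\<close>

lemma cycle_permutation_of_path:
  assumes "r\<^sup>*\<^sup>* b a" and "r a b" and "a \<noteq> b"
  shows "\<exists>\<pi>. \<pi> permutes UNIV \<and> \<pi> a = b \<and> (\<forall>i. \<pi> i \<noteq> i \<longrightarrow> r i (\<pi> i))"
proof -
  obtain xs0 where "rtrancl_path r b xs0 a"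
    using assms(1) by (auto simp: rtranclp_eq_rtrancl_path)
  then obtain xs where path: "rtrancl_path r b xs a" and dist: "distinct (b # xs)"
    by (rule rtrancl_path_distinct)
  have "xs \<noteq> []"
    using path assms(3) by (cases rule: rtrancl_path.cases) auto
  define cs where "cs = b # xs"
  define \<pi> where "\<pi> = cycle_of_list cs"
  have last: "cs ! length xs = a"
    using rtrancl_path_last[OF path \<open>xs \<noteq> []\<close>] \<open>xs \<noteq> []\<close>
    by (simp add: cs_def last_conv_nth)
  have step: "\<pi> (cs ! k) = cs ! (Suc k mod length cs)" if "k < length cs" for k
  proof -
    have "map \<pi> cs = rotate1 cs"
      using cyclic_rotation[of cs 1] dist unfolding \<pi>_def cs_def by simp
    then have "\<pi> (cs ! k) = rotate1 cs ! k"
      using that by (metis nth_map)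
    then show ?thesis using that by (simp add: nth_rotate1)
  qed
  have "\<pi> permutes UNIV"
    using cycle_permutes[of cs] unfolding \<pi>_def by (rule permutes_subset) simp
  moreover have \<pi>a: "\<pi> a = b"
    using step[of "length xs"] last by (simp add: cs_def)
  moreover have "r i (\<pi> i)" if "\<pi> i \<noteq> i" for i
  proof -
    have "i \<in> set cs" using that id_outside_supp[of i cs] unfolding \<pi>_def by blast
    then obtain k where k: "k < length cs" "i = cs ! k" by (auto simp: in_set_conv_nth)
    show ?thesis
    proof (cases "k = length xs")
      case True
      then show ?thesis using k last \<pi>a assms(2) by simp
    next
      case False
      then have "k < length xs" using k by (simp add: cs_def)
      then show ?thesis
        using step[OF k(1)] k(2) rtrancl_path_nth[OF path] by (simp add: cs_def)
    qed
  qed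
  ultimately show ?thesis by blast
qed

lemma balanced_flow_reaches_back:
  fixes f :: "'a::finite \<Rightarrow> 'a \<Rightarrow> real"
  assumes nonneg: "\<And>i j. 0 \<le> f i j"
    and balanced: "\<And>i. (\<Sum>j\<in>UNIV. f i j) = (\<Sum>j\<in>UNIV. f j i)"
    and ab: "0 < f a b"
  shows "(\<lambda>x y. 0 < f x y)\<^sup>*\<^sup>* b a"
proof (rule ccontr)
  \<comment> \<open>No flow leaves the set R reachable from b, so by balance none enters it;
    yet a \<notin> R sends f a b into b \<in> R.\<close>
  define R where "R = {x. (\<lambda>x y. 0 < f x y)\<^sup>*\<^sup>* b x}"
  assume "\<not> ?thesis"
  then have a: "a \<in> UNIV - R" and b: "b \<in> R"
    unfolding R_def by auto
  have no_exit: "f i j = 0" if "i \<in> R" "j \<in> UNIV - R" for i j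
    using that nonneg[of i j] unfolding R_def
    by (auto intro: rtranclp.rtrancl_into_rtrancl simp: order_less_le)
  have "(\<Sum>i\<in>R. \<Sum>j\<in>R. f j i) + (\<Sum>i\<in>R. \<Sum>j\<in>UNIV - R. f j i) = (\<Sum>i\<in>R. \<Sum>j\<in>UNIV. f j i)"
    by (simp add: sum.distrib sum.subset_diff[of R UNIV])
  also have "\<dots> = (\<Sum>i\<in>R. \<Sum>j\<in>UNIV. f i j)"
    by (simp add: balanced)
  also have "\<dots> = (\<Sum>i\<in>R. \<Sum>j\<in>R. f i j)"
    using no_exit by (intro sum.cong refl sum.mono_neutral_right) auto
  also have "\<dots> = (\<Sum>i\<in>R. \<Sum>j\<in>R. f j i)"
    by (rule sum.swap)
  finally have inflow: "(\<Sum>i\<in>R. \<Sum>j\<in>UNIV - R. f j i) = 0"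
    by simp
  have "f a b \<le> (\<Sum>j\<in>UNIV - R. f j b)"
    using a by (intro member_le_sum nonneg) auto
  also have "\<dots> \<le> (\<Sum>i\<in>R. \<Sum>j\<in>UNIV - R. f j i)"
    using b by (intro member_le_sum sum_nonneg nonneg) auto
  finally show False
    using ab inflow by simp
qed

lemma balanced_flow_edge_on_cycle:
  fixes f :: "'a::finite \<Rightarrow> 'a \<Rightarrow> real"
  assumes "\<And>i j. 0 \<le> f i j" and "\<And>i. (\<Sum>j\<in>UNIV. f i j) = (\<Sum>j\<in>UNIV. f j i)"
    and "0 < f a b" and "a \<noteq> b"
  shows "\<exists>\<pi>. \<pi> permutes UNIV \<and> \<pi> a = b \<and> (\<forall>i. \<pi> i \<noteq> i \<longrightarrow> 0 < f i (\<pi> i))"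
  using cycle_permutation_of_path[OF balanced_flow_reaches_back[OF assms(1-3)]] assms(3,4)
  by blast

section \<open>Couplings with uniform marginals\<close>

definition row_sum :: "real^'n^'m \<Rightarrow> 'm \<Rightarrow> real" where
  "row_sum X i = (\<Sum>j\<in>UNIV. X $ i $ j)"

definition col_sum :: "real^'n^'m \<Rightarrow> 'n \<Rightarrow> real" where
  "col_sum X j = (\<Sum>i\<in>UNIV. X $ i $ j)"

lemma sum_row_sum_eq_sum_col_sum: "(\<Sum>i\<in>UNIV. row_sum X i) = (\<Sum>j\<in>UNIV. col_sum X j)"
  unfolding row_sum_def col_sum_def by (rule sum.swap)

lemma row_sum_pos_of_positive_diagonal:
  assumes "\<And>i j. 0 \<le> X $ i $ j" and "positive_diagonal X \<sigma>"
  shows "0 < row_sum X i"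
proof -
  have "X $ i $ \<sigma> i \<le> row_sum X i"
    unfolding row_sum_def by (intro member_le_sum assms(1)) auto
  then show ?thesis
    using assms(2) unfolding positive_diagonal_def by (meson less_le_trans)
qed

lemma col_sum_pos_of_positive_diagonal:
  assumes "\<And>i j. 0 \<le> X $ i $ j" and "positive_diagonal X \<sigma>"
  shows "0 < col_sum X j"
proof -
  have \<sigma>: "\<sigma> (inv \<sigma> j) = j"
    using assms(2) unfolding positive_diagonal_def by (metis permutes_inverses(1))
  have "X $ inv \<sigma> j $ \<sigma> (inv \<sigma> j) \<le> col_sum X j"
    unfolding col_sum_def \<sigma> by (intro member_le_sum assms(1)) auto
  then show ?thesis
    using assms(2) unfolding positive_diagonal_def by (meson less_le_trans)
qed

definition uniform_coupling :: "real^'n^'n \<Rightarrow> bool" where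
  "uniform_coupling Q \<longleftrightarrow> (\<forall>i j. 0 \<le> Q $ i $ j)
     \<and> (\<forall>i. row_sum Q i = 1 / real CARD('n)) \<and> (\<forall>j. col_sum Q j = 1 / real CARD('n))"

lemma uniform_coupling_le_one:
  assumes "uniform_coupling Q"
  shows "Q $ i $ j \<le> 1"
proof -
  have "Q $ i $ j \<le> row_sum Q i"
    using assms unfolding row_sum_def uniform_coupling_def by (intro member_le_sum) auto
  also have "\<dots> \<le> 1"
    using assms unfolding uniform_coupling_def by (simp add: divide_le_eq_1)
  finally show ?thesis .
qed

lemma uniform_coupling_weighted_row_sum:
  fixes Q :: "real^'n^'n"
  assumes "uniform_coupling Q"
  shows "(\<Sum>i\<in>UNIV. \<Sum>j\<in>UNIV. Q $ i $ j * f i) = (\<Sum>i\<in>UNIV. f i) / real CARD('n)"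
  using assms
  by (simp add: uniform_coupling_def row_sum_def sum_divide_distrib flip: sum_distrib_right)

lemma uniform_coupling_weighted_col_sum:
  fixes Q :: "real^'n^'n"
  assumes "uniform_coupling Q"
  shows "(\<Sum>i\<in>UNIV. \<Sum>j\<in>UNIV. Q $ i $ j * f j) = (\<Sum>j\<in>UNIV. f j) / real CARD('n)"
  using assms
  by (subst sum.swap) (simp add: uniform_coupling_def col_sum_def sum_divide_distrib flip: sum_distrib_right)

definition permutation_coupling :: "('n \<Rightarrow> 'n) \<Rightarrow> real^'n^'n" where
  "permutation_coupling \<sigma> = (\<chi> i j. if j = \<sigma> i then 1 / real CARD('n) else 0)"

lemma permutation_coupling_pos_iff:
  "0 < permutation_coupling \<sigma> $ i $ j \<longleftrightarrow> j = \<sigma> i"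
  by (simp add: permutation_coupling_def)

lemma uniform_coupling_permutation_coupling:
  fixes \<sigma> :: "'n::finite \<Rightarrow> 'n"
  assumes "\<sigma> permutes UNIV"
  shows "uniform_coupling (permutation_coupling \<sigma>)"
proof -
  have "col_sum (permutation_coupling \<sigma>) j
      = (\<Sum>i\<in>UNIV. if i = inv \<sigma> j then 1 / real CARD('n) else 0)" for j
    unfolding col_sum_def permutation_coupling_def using assms
    by (intro sum.cong refl) (auto simp: permutes_inverses)
  then show ?thesis
    by (simp add: uniform_coupling_def permutation_coupling_def row_sum_def)
qed

lemma uniform_coupling_diagonal_through:
  assumes Q: "uniform_coupling Q" and \<sigma>: "\<sigma> permutes UNIV" and st: "0 < Q $ s $ t"
  shows "\<exists>\<tau>. \<tau> permutes UNIV \<and> \<tau> s = t \<and> (\<forall>i. \<tau> i \<noteq> \<sigma> i \<longrightarrow> 0 < Q $ i $ \<tau> i)"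
proof (cases "\<sigma> s = t")
  case True
  then show ?thesis using \<sigma> by blast
next
  case False
  define b where "b = inv \<sigma> t"
  have \<sigma>b: "\<sigma> b = t"
    unfolding b_def using \<sigma> by (simp add: permutes_inverses(1))
  have "\<exists>\<pi>. \<pi> permutes UNIV \<and> \<pi> s = b \<and> (\<forall>i. \<pi> i \<noteq> i \<longrightarrow> 0 < Q $ i $ \<sigma> (\<pi> i))"
  proof (rule balanced_flow_edge_on_cycle)
    show "0 \<le> Q $ i $ \<sigma> j" for i j
      using Q unfolding uniform_coupling_def by blast
    show "(\<Sum>j\<in>UNIV. Q $ i $ \<sigma> j) = (\<Sum>j\<in>UNIV. Q $ j $ \<sigma> i)" for i
    proof -
      have "(\<Sum>j\<in>UNIV. Q $ i $ \<sigma> j) = row_sum Q i"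
        using sum.permute[OF \<sigma>, of "\<lambda>j. Q $ i $ j"] by (simp add: row_sum_def comp_def)
      also have "\<dots> = col_sum Q (\<sigma> i)"
        using Q by (simp add: uniform_coupling_def)
      finally show ?thesis
        by (simp add: col_sum_def)
    qed
    show "0 < Q $ s $ \<sigma> b" and "s \<noteq> b"
      using st \<sigma>b False by auto
  qed
  then obtain \<pi> where \<pi>: "\<pi> permutes UNIV" "\<pi> s = b" and pos: "\<forall>i. \<pi> i \<noteq> i \<longrightarrow> 0 < Q $ i $ \<sigma> (\<pi> i)"
    by blast
  have "\<sigma> \<circ> \<pi> permutes UNIV"
    using \<pi>(1) \<sigma> by (rule permutes_compose)
  moreover have "(\<sigma> \<circ> \<pi>) s = t"
    using \<pi>(2) \<sigma>b by simp
  moreover have "0 < Q $ i $ (\<sigma> \<circ> \<pi>) i" if "(\<sigma> \<circ> \<pi>) i \<noteq> \<sigma> i" for i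
  proof -
    have "\<pi> i \<noteq> i"
      using that by auto
    then show ?thesis
      using pos by simp
  qed
  ultimately show ?thesis
    by blast
qed

lemma compact_unit_entry_matrices:
  "compact {X :: real^'n^'m. \<forall>i j. 0 \<le> X $ i $ j \<and> X $ i $ j \<le> 1}"
proof (rule compact_eq_bounded_closed[THEN iffD2], rule conjI)
  have "norm X \<le> real CARD('m) * real CARD('n)" if "\<forall>i j. 0 \<le> X $ i $ j \<and> X $ i $ j \<le> 1"
    for X :: "real^'n^'m"
  proof -
    have "norm (X $ i) \<le> real CARD('n)" for i
      using norm_le_l1_cart[of "X $ i"] sum_mono[of UNIV "\<lambda>j. \<bar>X $ i $ j\<bar>" "\<lambda>_. 1"] that
      by auto
    moreover have "norm X \<le> (\<Sum>i\<in>UNIV. norm (X $ i))"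
      unfolding norm_vec_def by (rule L2_set_le_sum) simp
    ultimately show ?thesis
      using sum_mono[of UNIV "\<lambda>i. norm (X $ i)" "\<lambda>_. real CARD('n)"] by fastforce
  qed
  then show "bounded {X :: real^'n^'m. \<forall>i j. 0 \<le> X $ i $ j \<and> X $ i $ j \<le> 1}"
    unfolding bounded_iff by blast
  show "closed {X :: real^'n^'m. \<forall>i j. 0 \<le> X $ i $ j \<and> X $ i $ j \<le> 1}"
    by (intro closed_Collect_all closed_Collect_conj closed_Collect_le continuous_intros)
qed

lemma compact_uniform_couplings: "compact {Q. uniform_coupling Q}"
proof -
  have "{Q. uniform_coupling Q}
      = {X :: real^'n^'n. \<forall>i j. 0 \<le> X $ i $ j \<and> X $ i $ j \<le> 1} \<inter> {Q. uniform_coupling Q}"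
    using uniform_coupling_le_one unfolding uniform_coupling_def by blast
  also have "compact \<dots>"
    unfolding uniform_coupling_def row_sum_def col_sum_def
    by (intro compact_Int_closed compact_unit_entry_matrices closed_Collect_conj closed_Collect_all
        closed_Collect_le closed_Collect_eq continuous_intros)
  finally show ?thesis .
qed

definition log_likelihood :: "real^'n^'m \<Rightarrow> real^'n^'m \<Rightarrow> real" where
  "log_likelihood Q X = (\<Sum>i\<in>UNIV. \<Sum>j\<in>UNIV. if 0 < Q $ i $ j then Q $ i $ j * ln (X $ i $ j) else 0)"

lemma sqrt_entry_diff_sq_le_log_likelihood_diff:
  fixes Q X :: "real^'n^'m"
  assumes "\<And>i j. 0 \<le> Q $ i $ j" and "\<And>i j. 0 \<le> X $ i $ j"
    and "\<And>i j. 0 < Q $ i $ j \<Longrightarrow> 0 < X $ i $ j"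
    and "(\<Sum>i\<in>UNIV. row_sum Q i) = (\<Sum>i\<in>UNIV. row_sum X i)"
  shows "(sqrt (Q $ i $ j) - sqrt (X $ i $ j))\<^sup>2 \<le> log_likelihood Q Q - log_likelihood Q X"
proof -
  let ?q = "\<lambda>p. Q $ fst p $ snd p" and ?x = "\<lambda>p. X $ fst p $ snd p"
  have double_sum: "(\<Sum>p\<in>UNIV. f p) = (\<Sum>i\<in>UNIV. \<Sum>j\<in>UNIV. f (i, j))" for f :: "'m \<times> 'n \<Rightarrow> real"
    by (simp add: sum.cartesian_product' flip: UNIV_Times_UNIV)
  have "(sqrt (Q $ i $ j) - sqrt (X $ i $ j))\<^sup>2 \<le> (\<Sum>p\<in>UNIV. (sqrt (?q p) - sqrt (?x p))\<^sup>2)"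
    using member_le_sum[of "(i, j)" UNIV "\<lambda>p. (sqrt (?q p) - sqrt (?x p))\<^sup>2"] by simp
  also have "\<dots> \<le> (\<Sum>p\<in>UNIV. if 0 < ?q p then ?q p * (ln (?q p) - ln (?x p)) else 0)"
    using assms by (intro hellinger_le_relative_entropy) (auto simp: row_sum_def double_sum)
  also have "\<dots> = log_likelihood Q Q - log_likelihood Q X"
    unfolding log_likelihood_def double_sum sum_subtractf[symmetric]
    by (intro sum.cong refl) (simp add: right_diff_distrib)
  finally show ?thesis .
qed

section \<open>Diagonal equivalence\<close>

definition diag_equivalent :: "real^'n^'m \<Rightarrow> real^'n^'m \<Rightarrow> bool" where
  "diag_equivalent X A \<longleftrightarrow>
     (\<exists>x y. (\<forall>i. 0 < x i) \<and> (\<forall>j. 0 < y j) \<and> (\<forall>i j. X $ i $ j = x i * A $ i $ j * y j))"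

lemma diag_equivalent_refl: "diag_equivalent A A"
  unfolding diag_equivalent_def by (intro exI[of _ "\<lambda>_. 1"]) simp

lemma diag_equivalent_pos_iff:
  assumes "diag_equivalent X A"
  shows "0 < X $ i $ j \<longleftrightarrow> 0 < A $ i $ j"
proof -
  obtain x y where "0 < x i" "0 < y j" "X $ i $ j = x i * A $ i $ j * y j"
    using assms unfolding diag_equivalent_def by blast
  then have "X $ i $ j = (x i * y j) * A $ i $ j" and "0 < x i * y j"
    by simp_all
  then show ?thesis using mult_less_cancel_left_pos[of "x i * y j" 0 "A $ i $ j"] by simp
qed

lemma diag_equivalent_nonneg_iff:
  assumes "diag_equivalent X A"
  shows "0 \<le> X $ i $ j \<longleftrightarrow> 0 \<le> A $ i $ j"
proof -
  obtain x y where "0 < x i" "0 < y j" "X $ i $ j = x i * A $ i $ j * y j"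
    using assms unfolding diag_equivalent_def by blast
  then have "X $ i $ j = (x i * y j) * A $ i $ j" and "0 < x i * y j"
    by simp_all
  then show ?thesis using mult_le_cancel_left_pos[of "x i * y j" 0 "A $ i $ j"] by simp
qed

lemma diag_equivalent_row_scale:
  assumes "diag_equivalent X A" and "\<And>i. 0 < r $ i" and "\<And>i. 0 < row_sum X i"
  shows "diag_equivalent (row_scale r X) A"
proof -
  obtain x y where "\<forall>i. 0 < x i" "\<forall>j. 0 < y j" "\<forall>i j. X $ i $ j = x i * A $ i $ j * y j"
    using assms(1) unfolding diag_equivalent_def by blast
  then show ?thesis
    using assms(2,3) unfolding diag_equivalent_def row_scale_def row_sum_def
    by (intro exI[of _ "\<lambda>i. x i * r $ i / row_sum X i"] exI[of _ y]) (auto simp: row_sum_def)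
qed

lemma diag_equivalent_col_scale:
  assumes "diag_equivalent X A" and "\<And>j. 0 < c $ j" and "\<And>j. 0 < col_sum X j"
  shows "diag_equivalent (col_scale c X) A"
proof -
  obtain x y where "\<forall>i. 0 < x i" "\<forall>j. 0 < y j" "\<forall>i j. X $ i $ j = x i * A $ i $ j * y j"
    using assms(1) unfolding diag_equivalent_def by blast
  then show ?thesis
    using assms(2,3) unfolding diag_equivalent_def col_scale_def col_sum_def
    by (intro exI[of _ x] exI[of _ "\<lambda>j. y j * c $ j / col_sum X j"]) (auto simp: col_sum_def)
qed

lemma diag_equivalent_cycle_prod_eq:
  assumes "diag_equivalent X A" and "inj_on \<tau> C" and "inj_on \<sigma> C" and "\<tau> ` C = \<sigma> ` C"
  shows "(\<Prod>i\<in>C. X $ i $ \<tau> i) * (\<Prod>i\<in>C. A $ i $ \<sigma> i)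
       = (\<Prod>i\<in>C. X $ i $ \<sigma> i) * (\<Prod>i\<in>C. A $ i $ \<tau> i)"
proof -
  obtain x y where xy: "\<And>i j. X $ i $ j = x i * A $ i $ j * y j"
    using assms(1) unfolding diag_equivalent_def by blast
  have "(\<Prod>i\<in>C. y (\<tau> i)) = (\<Prod>i\<in>C. y (\<sigma> i))"
    using prod.reindex[OF assms(2), of y] prod.reindex[OF assms(3), of y] assms(4) by simp
  then show ?thesis
    unfolding xy prod.distrib by (simp add: ac_simps)
qed

lemma cycle_prod_eq_of_tendsto:
  assumes lim: "(X \<longlongrightarrow> L) F" and "F \<noteq> bot" and equiv: "\<forall>\<^sub>F k in F. diag_equivalent (X k) A"
    and cycle: "inj_on \<tau> C" "inj_on \<sigma> C" "\<tau> ` C = \<sigma> ` C"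
  shows "(\<Prod>i\<in>C. L $ i $ \<tau> i) * (\<Prod>i\<in>C. A $ i $ \<sigma> i)
       = (\<Prod>i\<in>C. L $ i $ \<sigma> i) * (\<Prod>i\<in>C. A $ i $ \<tau> i)"
proof (rule tendsto_unique[OF \<open>F \<noteq> bot\<close>])
  have entry: "((\<lambda>k. X k $ i $ j) \<longlongrightarrow> L $ i $ j) F" for i j
    by (intro tendsto_vec_nth lim)
  show "((\<lambda>k. (\<Prod>i\<in>C. X k $ i $ \<tau> i) * (\<Prod>i\<in>C. A $ i $ \<sigma> i))
          \<longlongrightarrow> (\<Prod>i\<in>C. L $ i $ \<tau> i) * (\<Prod>i\<in>C. A $ i $ \<sigma> i)) F"
    by (intro tendsto_mult_right tendsto_prod entry)
  have "((\<lambda>k. (\<Prod>i\<in>C. X k $ i $ \<sigma> i) * (\<Prod>i\<in>C. A $ i $ \<tau> i))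
          \<longlongrightarrow> (\<Prod>i\<in>C. L $ i $ \<sigma> i) * (\<Prod>i\<in>C. A $ i $ \<tau> i)) F"
    by (intro tendsto_mult_right tendsto_prod entry)
  moreover have "\<forall>\<^sub>F k in F. (\<Prod>i\<in>C. X k $ i $ \<sigma> i) * (\<Prod>i\<in>C. A $ i $ \<tau> i)
                         = (\<Prod>i\<in>C. X k $ i $ \<tau> i) * (\<Prod>i\<in>C. A $ i $ \<sigma> i)"
    using equiv by (rule eventually_mono) (rule diag_equivalent_cycle_prod_eq[OF _ cycle, symmetric])
  ultimately show "((\<lambda>k. (\<Prod>i\<in>C. X k $ i $ \<tau> i) * (\<Prod>i\<in>C. A $ i $ \<sigma> i))
          \<longlongrightarrow> (\<Prod>i\<in>C. L $ i $ \<sigma> i) * (\<Prod>i\<in>C. A $ i $ \<tau> i)) F"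
    by (rule Lim_transform_eventually)
qed

lemma sinkhorn_iter_diag_equivalent:
  assumes nonneg: "\<And>i j. 0 \<le> A $ i $ j" and diag: "positive_diagonal A \<sigma>"
    and r: "\<And>i. 0 < r $ i" and c: "\<And>j. 0 < c $ j"
  shows "diag_equivalent (sinkhorn_iter r c A k) A"
proof (induction k)
  case 0
  then show ?case by (simp add: diag_equivalent_refl)
next
  case (Suc k)
  let ?X = "sinkhorn_iter r c A k"
  have "0 \<le> ?X $ i $ j" for i j
    using Suc.IH nonneg by (simp add: diag_equivalent_nonneg_iff)
  moreover have "positive_diagonal ?X \<sigma>"
    using Suc.IH diag by (simp add: positive_diagonal_def diag_equivalent_pos_iff)
  ultimately show ?case
    using Suc.IH r c
    by (simp add: diag_equivalent_row_scale diag_equivalent_col_scale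
        row_sum_pos_of_positive_diagonal col_sum_pos_of_positive_diagonal)
qed

section \<open>Convergence of Sinkhorn scaling with uniform marginals\<close>

locale uniform_sinkhorn =
  fixes A :: "real^'n^'n" and \<sigma> :: "'n \<Rightarrow> 'n"
  assumes nonneg: "\<And>i j. 0 \<le> A $ i $ j" and pos_diag: "positive_diagonal A \<sigma>"
begin

definition iter :: "nat \<Rightarrow> real^'n^'n" where
  "iter k = sinkhorn_iter uniform_marginal uniform_marginal A k"

lemma iter_diag_equivalent: "diag_equivalent (iter k) A"
  unfolding iter_def
  by (rule sinkhorn_iter_diag_equivalent[OF nonneg pos_diag]) (simp_all add: uniform_marginal_def)

lemma iter_nonneg: "0 \<le> iter k $ i $ j"
  using diag_equivalent_nonneg_iff[OF iter_diag_equivalent] nonneg by simp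

lemma iter_pos_iff: "0 < iter k $ i $ j \<longleftrightarrow> 0 < A $ i $ j"
  using iter_diag_equivalent by (rule diag_equivalent_pos_iff)

lemma iter_positive_diagonal: "positive_diagonal (iter k) \<sigma>"
  using pos_diag by (simp add: positive_diagonal_def iter_pos_iff)

lemma row_sum_iter_pos: "0 < row_sum (iter k) i"
  using iter_nonneg iter_positive_diagonal by (rule row_sum_pos_of_positive_diagonal)

lemma col_sum_iter_pos: "0 < col_sum (iter k) j"
  using iter_nonneg iter_positive_diagonal by (rule col_sum_pos_of_positive_diagonal)

lemma iter_Suc:
  "iter (Suc k) $ i $ j = iter k $ i $ j
     / (real CARD('n) * (if even k then row_sum (iter k) i else col_sum (iter k) j))"
  by (simp add: iter_def row_scale_def col_scale_def row_sum_def col_sum_def uniform_marginal_def)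

lemma row_sum_iter_odd:
  assumes "odd k"
  shows "row_sum (iter k) i = 1 / real CARD('n)"
proof -
  obtain m where m: "k = Suc m" "even m"
    using assms by (metis odd_Suc_minus_one even_Suc)
  have "row_sum (iter k) i = (\<Sum>j\<in>UNIV. iter m $ i $ j / (real CARD('n) * row_sum (iter m) i))"
    using m by (simp add: row_sum_def[of "iter (Suc m)"] iter_Suc)
  also have "\<dots> = 1 / real CARD('n)"
    using row_sum_iter_pos[of m i] by (simp add: row_sum_def flip: sum_divide_distrib)
  finally show ?thesis .
qed

lemma col_sum_iter_even:
  assumes "even k" and "k \<noteq> 0"
  shows "col_sum (iter k) j = 1 / real CARD('n)"
proof -
  obtain m where m: "k = Suc m" "odd m"
    using assms by (metis even_Suc not0_implies_Suc)
  have "col_sum (iter k) j = (\<Sum>i\<in>UNIV. iter m $ i $ j / (real CARD('n) * col_sum (iter m) j))"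
    using m by (simp add: col_sum_def[of "iter (Suc m)"] iter_Suc)
  also have "\<dots> = 1 / real CARD('n)"
    using col_sum_iter_pos[of m j] by (simp add: col_sum_def flip: sum_divide_distrib)
  finally show ?thesis .
qed

lemma total_iter:
  assumes "k \<noteq> 0"
  shows "(\<Sum>i\<in>UNIV. row_sum (iter k) i) = 1"
  using assms by (cases "even k")
    (simp_all add: sum_row_sum_eq_sum_col_sum col_sum_iter_even row_sum_iter_odd)

lemma iter_le_one:
  assumes "k \<noteq> 0"
  shows "iter k $ i $ j \<le> 1"
proof -
  have "iter k $ i $ j \<le> row_sum (iter k) i"
    unfolding row_sum_def by (intro member_le_sum iter_nonneg) auto
  also have "\<dots> \<le> (\<Sum>i\<in>UNIV. row_sum (iter k) i)"
    by (intro member_le_sum less_imp_le row_sum_iter_pos) auto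
  finally show ?thesis
    using total_iter[OF assms] by simp
qed

definition gain :: "nat \<Rightarrow> real" where
  "gain k = - (if even k then \<Sum>i\<in>UNIV. ln (real CARD('n) * row_sum (iter k) i)
               else \<Sum>j\<in>UNIV. ln (real CARD('n) * col_sum (iter k) j)) / real CARD('n)"

lemma log_likelihood_iter_Suc:
  assumes Q: "uniform_coupling Q" and supp: "\<And>i j. 0 < Q $ i $ j \<Longrightarrow> 0 < A $ i $ j"
  shows "log_likelihood Q (iter (Suc k)) = log_likelihood Q (iter k) + gain k"
proof -
  define d where "d i j = real CARD('n) * (if even k then row_sum (iter k) i else col_sum (iter k) j)"
    for i j
  have d_pos: "0 < d i j" for i j
    unfolding d_def using row_sum_iter_pos col_sum_iter_pos by simp
  have "(if 0 < Q $ i $ j then Q $ i $ j * ln (iter (Suc k) $ i $ j) else 0)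
      = (if 0 < Q $ i $ j then Q $ i $ j * ln (iter k $ i $ j) else 0) - Q $ i $ j * ln (d i j)"
    for i j
  proof (cases "0 < Q $ i $ j")
    case True
    then have "0 < iter k $ i $ j"
      using supp iter_pos_iff by blast
    then show ?thesis
      using True d_pos[of i j] by (simp add: iter_Suc d_def[symmetric] ln_div right_diff_distrib)
  next
    case False
    then show ?thesis
      using Q unfolding uniform_coupling_def by (simp add: order.antisym not_less)
  qed
  then have "log_likelihood Q (iter (Suc k))
      = log_likelihood Q (iter k) - (\<Sum>i\<in>UNIV. \<Sum>j\<in>UNIV. Q $ i $ j * ln (d i j))"
    unfolding log_likelihood_def by (simp add: sum_subtractf)
  also have "(\<Sum>i\<in>UNIV. \<Sum>j\<in>UNIV. Q $ i $ j * ln (d i j)) = - gain k"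
    by (cases "even k")
      (simp_all add: d_def gain_def uniform_coupling_weighted_row_sum[OF Q]
        uniform_coupling_weighted_col_sum[OF Q])
  finally show ?thesis by simp
qed

lemma sqrt_marginal_sub_one_sq_le_gain:
  assumes "k \<noteq> 0"
  shows "(sqrt (real CARD('n) * row_sum (iter k) i) - 1)\<^sup>2 \<le> real CARD('n) * gain k"
    and "(sqrt (real CARD('n) * col_sum (iter k) j) - 1)\<^sup>2 \<le> real CARD('n) * gain k"
proof -
  have total: "(\<Sum>i\<in>UNIV. real CARD('n) * row_sum (iter k) i) = real CARD('n)"
    "(\<Sum>j\<in>UNIV. real CARD('n) * col_sum (iter k) j) = real CARD('n)"
    using total_iter[OF assms] sum_row_sum_eq_sum_col_sum[of "iter k"]
    by (simp_all flip: sum_distrib_left)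
  have even_bound: "(sqrt (real CARD('n) * row_sum (iter k) i') - 1)\<^sup>2 \<le> real CARD('n) * gain k"
    if "even k" for i'
    using that sqrt_sub_one_sq_le_neg_sum_ln[OF _ total(1)] row_sum_iter_pos
    by (simp add: gain_def)
  have odd_bound: "(sqrt (real CARD('n) * col_sum (iter k) j') - 1)\<^sup>2 \<le> real CARD('n) * gain k"
    if "odd k" for j'
    using that sqrt_sub_one_sq_le_neg_sum_ln[OF _ total(2)] col_sum_iter_pos
    by (simp add: gain_def)
  have "0 \<le> real CARD('n) * gain k"
    using order_trans[OF zero_le_power2 even_bound] order_trans[OF zero_le_power2 odd_bound] by blast
  then show "(sqrt (real CARD('n) * row_sum (iter k) i) - 1)\<^sup>2 \<le> real CARD('n) * gain k"
    and "(sqrt (real CARD('n) * col_sum (iter k) j) - 1)\<^sup>2 \<le> real CARD('n) * gain k"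
    using even_bound odd_bound assms
    by (cases "even k"; simp add: row_sum_iter_odd col_sum_iter_even)+
qed

lemma gain_nonneg:
  assumes "k \<noteq> 0"
  shows "0 \<le> gain k"
  using order_trans[OF zero_le_power2 sqrt_marginal_sub_one_sq_le_gain(1)[OF assms]]
  by (simp add: zero_le_mult_iff)

lemma log_likelihood_iter_nonpos:
  assumes "k \<noteq> 0" and supp: "\<And>i j. 0 < Q $ i $ j \<Longrightarrow> 0 < A $ i $ j"
  shows "log_likelihood Q (iter k) \<le> 0"
  unfolding log_likelihood_def
proof (intro sum_nonpos)
  fix i j
  show "(if 0 < Q $ i $ j then Q $ i $ j * ln (iter k $ i $ j) else 0) \<le> 0"
    using supp[of i j] iter_pos_iff[of k i j] iter_le_one[OF assms(1), of i j]
    by (auto intro: mult_nonneg_nonpos)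
qed

lemma gain_tendsto_zero: "gain \<longlonglongrightarrow> 0"
proof -
  define Q where "Q = permutation_coupling \<sigma>"
  have Q: "uniform_coupling Q"
    unfolding Q_def using pos_diag
    by (intro uniform_coupling_permutation_coupling) (simp add: positive_diagonal_def)
  have supp: "0 < A $ i $ j" if "0 < Q $ i $ j" for i j
    using that pos_diag by (simp add: Q_def permutation_coupling_pos_iff positive_diagonal_def)
  have step: "log_likelihood Q (iter (Suc k)) = log_likelihood Q (iter k) + gain k" for k
    using Q supp by (rule log_likelihood_iter_Suc)
  have telescope: "log_likelihood Q (iter (Suc m)) = log_likelihood Q (iter 1) + (\<Sum>i<m. gain (Suc i))"
    for m
    by (induction m) (simp_all add: step)
  have nonpos: "log_likelihood Q (iter (Suc m)) \<le> 0" for m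
    by (rule log_likelihood_iter_nonpos) (simp_all add: supp)
  have "summable (\<lambda>i. gain (Suc i))"
  proof (rule summableI_nonneg_bounded)
    show "0 \<le> gain (Suc i)" for i
      by (simp add: gain_nonneg)
    show "(\<Sum>i<m. gain (Suc i)) \<le> - log_likelihood Q (iter 1)" for m
      using telescope[of m] nonpos[of m] by simp
  qed
  then have "(\<lambda>i. gain (Suc i)) \<longlonglongrightarrow> 0"
    by (rule summable_LIMSEQ_zero)
  then show ?thesis
    by (rule LIMSEQ_imp_Suc)
qed

lemma tendsto_uniform_marginal_of_gain_bound:
  assumes "\<And>k. 0 \<le> z k"
    and "\<And>k. k \<noteq> 0 \<Longrightarrow> (sqrt (real CARD('n) * z k) - 1)\<^sup>2 \<le> real CARD('n) * gain k"
  shows "z \<longlonglongrightarrow> 1 / real CARD('n)"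
proof -
  have "(\<lambda>k. real CARD('n) * z k) \<longlonglongrightarrow> 1"
  proof (rule tendsto_of_sqrt_diff_sq_le)
    show "\<forall>\<^sub>F k in sequentially. (sqrt (real CARD('n) * z k) - sqrt 1)\<^sup>2 \<le> real CARD('n) * gain k"
      using eventually_gt_at_top[of 0] by eventually_elim (simp add: assms(2))
    show "(\<lambda>k. real CARD('n) * gain k) \<longlonglongrightarrow> 0"
      using tendsto_mult_right_zero[OF gain_tendsto_zero] by simp
  qed (simp_all add: assms(1))
  from tendsto_divide[OF this tendsto_const[of "real CARD('n)"]] show ?thesis
    by simp
qed

lemma row_sum_iter_tendsto: "(\<lambda>k. row_sum (iter k) i) \<longlonglongrightarrow> 1 / real CARD('n)"
  by (rule tendsto_uniform_marginal_of_gain_bound)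
    (simp_all add: less_imp_le row_sum_iter_pos sqrt_marginal_sub_one_sq_le_gain)

lemma col_sum_iter_tendsto: "(\<lambda>k. col_sum (iter k) j) \<longlonglongrightarrow> 1 / real CARD('n)"
  by (rule tendsto_uniform_marginal_of_gain_bound)
    (simp_all add: less_imp_le col_sum_iter_pos sqrt_marginal_sub_one_sq_le_gain)

lemma limit_point_uniform_coupling:
  assumes r: "strict_mono r" and lim: "(iter \<circ> r) \<longlonglongrightarrow> L"
  shows "uniform_coupling L" and "\<And>i j. 0 < L $ i $ j \<Longrightarrow> 0 < A $ i $ j"
proof -
  have entry: "(\<lambda>m. iter (r m) $ i $ j) \<longlonglongrightarrow> L $ i $ j" for i j
    using tendsto_vec_nth[OF tendsto_vec_nth[OF lim]] by (simp add: comp_def)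
  have "0 \<le> L $ i $ j" for i j
    using entry by (rule LIMSEQ_le_const) (simp add: iter_nonneg)
  moreover have "row_sum L i = 1 / real CARD('n)" for i
  proof (rule LIMSEQ_unique)
    show "(\<lambda>m. row_sum (iter (r m)) i) \<longlonglongrightarrow> row_sum L i"
      unfolding row_sum_def by (intro tendsto_sum entry)
    show "(\<lambda>m. row_sum (iter (r m)) i) \<longlonglongrightarrow> 1 / real CARD('n)"
      using LIMSEQ_subseq_LIMSEQ[OF row_sum_iter_tendsto r] by (simp add: comp_def)
  qed
  moreover have "col_sum L j = 1 / real CARD('n)" for j
  proof (rule LIMSEQ_unique)
    show "(\<lambda>m. col_sum (iter (r m)) j) \<longlonglongrightarrow> col_sum L j"
      unfolding col_sum_def by (intro tendsto_sum entry)
    show "(\<lambda>m. col_sum (iter (r m)) j) \<longlonglongrightarrow> 1 / real CARD('n)"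
      using LIMSEQ_subseq_LIMSEQ[OF col_sum_iter_tendsto r] by (simp add: comp_def)
  qed
  ultimately show "uniform_coupling L"
    unfolding uniform_coupling_def by blast
  show "0 < A $ i $ j" if "0 < L $ i $ j" for i j
  proof (rule ccontr)
    assume "\<not> 0 < A $ i $ j"
    then have "iter k $ i $ j = 0" for k
      using iter_pos_iff[of k i j] iter_nonneg[of k i j] by simp
    then have "(\<lambda>_. 0) \<longlonglongrightarrow> L $ i $ j"
      using entry[of i j] by simp
    then show False
      using that by (simp add: LIMSEQ_const_iff)
  qed
qed

lemma iter_convergent: "convergent iter"
proof -
  have "\<forall>k. iter (Suc k) \<in> {X. \<forall>i j. 0 \<le> X $ i $ j \<and> X $ i $ j \<le> 1}"
    by (simp add: iter_nonneg iter_le_one)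
  then obtain L r where r: "strict_mono r" and lim: "((\<lambda>k. iter (Suc k)) \<circ> r) \<longlonglongrightarrow> L"
    by (rule seq_compactE[OF compact_imp_seq_compact[OF compact_unit_entry_matrices]])
  have "strict_mono (Suc \<circ> r)" and "(iter \<circ> (Suc \<circ> r)) \<longlonglongrightarrow> L"
    using r lim by (simp_all add: strict_mono_def comp_def)
  note L = limit_point_uniform_coupling[OF this]
  have entry: "(\<lambda>m. iter (Suc (r m)) $ i $ j) \<longlonglongrightarrow> L $ i $ j" for i j
    using tendsto_vec_nth[OF tendsto_vec_nth[OF lim]] by (simp add: comp_def)
  define G where "G k = log_likelihood L (iter (Suc k))" for k
  have mono: "incseq G"
    unfolding G_def by (rule incseq_SucI) (simp add: log_likelihood_iter_Suc[OF L] gain_nonneg)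
  have "(G \<circ> r) \<longlonglongrightarrow> log_likelihood L L"
    unfolding G_def log_likelihood_def comp_def
  proof (intro tendsto_sum)
    fix i j
    show "(\<lambda>m. if 0 < L $ i $ j then L $ i $ j * ln (iter (Suc (r m)) $ i $ j) else 0)
            \<longlonglongrightarrow> (if 0 < L $ i $ j then L $ i $ j * ln (L $ i $ j) else 0)"
      by (cases "0 < L $ i $ j") (auto intro!: tendsto_intros entry)
  qed
  with mono r have G: "G \<longlonglongrightarrow> log_likelihood L L"
    by (rule incseq_tendsto_of_subseq)
  have "(\<lambda>k. iter (Suc k) $ i $ j) \<longlonglongrightarrow> L $ i $ j" for i j
  proof (rule tendsto_of_sqrt_diff_sq_le)
    show "\<forall>\<^sub>F k in sequentially. (sqrt (iter (Suc k) $ i $ j) - sqrt (L $ i $ j))\<^sup>2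
                                 \<le> log_likelihood L L - G k"
      unfolding G_def power2_commute[of "sqrt (iter _ $ i $ j)"]
      using L iter_nonneg iter_pos_iff total_iter
      by (intro always_eventually allI sqrt_entry_diff_sq_le_log_likelihood_diff)
        (auto simp: uniform_coupling_def)
    show "(\<lambda>k. log_likelihood L L - G k) \<longlonglongrightarrow> 0"
      using tendsto_diff[OF tendsto_const[of "log_likelihood L L"] G] by simp
  qed (use L in \<open>simp_all add: iter_nonneg uniform_coupling_def\<close>)
  then have "(\<lambda>k. iter (Suc k)) \<longlonglongrightarrow> L"
    by (intro vec_tendstoI) auto
  then show ?thesis
    unfolding convergent_def by (blast intro: LIMSEQ_imp_Suc)
qed

lemma iter_tendsto_sinkhorn_limit:
  "iter \<longlonglongrightarrow> sinkhorn_limit uniform_marginal uniform_marginal A"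
  using iter_convergent unfolding sinkhorn_limit_def iter_def[abs_def]
  by (simp add: convergent_LIMSEQ_iff)

lemma uniform_coupling_sinkhorn_limit:
  "uniform_coupling (sinkhorn_limit uniform_marginal uniform_marginal A)"
  using limit_point_uniform_coupling(1)[OF strict_mono_id] iter_tendsto_sinkhorn_limit by simp

lemma sinkhorn_limit_cycle_prod_eq:
  assumes "inj_on \<tau> C" and "inj_on \<rho> C" and "\<tau> ` C = \<rho> ` C"
  shows "(\<Prod>i\<in>C. sinkhorn_limit uniform_marginal uniform_marginal A $ i $ \<tau> i) * (\<Prod>i\<in>C. A $ i $ \<rho> i)
       = (\<Prod>i\<in>C. sinkhorn_limit uniform_marginal uniform_marginal A $ i $ \<rho> i) * (\<Prod>i\<in>C. A $ i $ \<tau> i)"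
  using iter_tendsto_sinkhorn_limit _ _ assms
  by (rule cycle_prod_eq_of_tendsto) (simp_all add: iter_diag_equivalent)

end

section \<open>Concentration on leading diagonals\<close>

lemma entry_power_nth: "entry_power l M $ i $ j = M $ i $ j powr l"
  by (simp add: entry_power_def)

lemma positive_diagonal_entry_power:
  assumes "positive_diagonal M \<sigma>"
  shows "positive_diagonal (entry_power l M) \<sigma>"
  using assms unfolding positive_diagonal_def by (simp add: entry_power_nth) (metis order_less_irrefl)

lemma uniform_sinkhorn_entry_power:
  assumes "\<forall>i j. 0 \<le> M $ i $ j" and "positive_diagonal M \<sigma>"
  shows "uniform_sinkhorn (entry_power l M) \<sigma>"
proof
  show "0 \<le> entry_power l M $ i $ j" for i j
    by (simp add: entry_power_nth)
  show "positive_diagonal (entry_power l M) \<sigma>"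
    using assms(2) by (rule positive_diagonal_entry_power)
qed

lemma exists_leading_positive_diagonal:
  assumes nonneg: "\<forall>i j. 0 \<le> M $ i $ j" and "\<exists>\<sigma>. positive_diagonal M \<sigma>"
  shows "\<exists>\<sigma>. leading_diagonal M \<sigma> \<and> positive_diagonal M \<sigma>"
proof -
  obtain \<sigma>0 where \<sigma>0: "positive_diagonal M \<sigma>0"
    using assms(2) by blast
  define S where "S = {\<tau>. \<tau> permutes (UNIV :: 'a set)}"
  have S: "finite S" "\<sigma>0 \<in> S"
    using \<sigma>0 by (simp_all add: S_def finite_permutations positive_diagonal_def)
  have "Max (diag_prod M ` S) \<in> diag_prod M ` S"
    using S by (intro Max_in) auto
  then obtain \<sigma> where "\<sigma> \<in> S" and max: "diag_prod M \<sigma> = Max (diag_prod M ` S)"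
    by auto
  then have lead: "leading_diagonal M \<sigma>"
    using S by (auto simp: leading_diagonal_def S_def)
  have "0 < diag_prod M \<sigma>0"
    using \<sigma>0 unfolding diag_prod_def positive_diagonal_def by (simp add: prod_pos)
  also have "\<dots> \<le> diag_prod M \<sigma>"
    using lead \<sigma>0 by (simp add: leading_diagonal_def positive_diagonal_def)
  finally have "diag_prod M \<sigma> \<noteq> 0"
    by simp
  then have "M $ i $ \<sigma> i \<noteq> 0" for i
    unfolding diag_prod_def by (simp add: prod_zero_iff)
  then have "positive_diagonal M \<sigma>"
    using lead nonneg by (simp add: positive_diagonal_def leading_diagonal_def order_less_le)
  with lead show ?thesis by blast
qed

lemma sinkhorn_limit_entry_power_uniform_coupling:
  assumes "\<forall>i j. 0 \<le> M $ i $ j" and "positive_diagonal M \<sigma>"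
  shows "uniform_coupling (sinkhorn_limit uniform_marginal uniform_marginal (entry_power l M))"
  using uniform_sinkhorn_entry_power[OF assms] by (rule uniform_sinkhorn.uniform_coupling_sinkhorn_limit)

lemma diag_prod_less_of_not_leading:
  assumes "leading_diagonal M \<sigma>" and "\<tau> permutes UNIV" and "\<not> leading_diagonal M \<tau>"
  shows "diag_prod M \<tau> < diag_prod M \<sigma>"
proof -
  obtain \<rho> where "\<rho> permutes UNIV" and "diag_prod M \<tau> < diag_prod M \<rho>"
    using assms(2,3) unfolding leading_diagonal_def by (auto simp: not_le)
  then show ?thesis
    using assms(1) unfolding leading_diagonal_def by (blast intro: less_le_trans)
qed

lemma sinkhorn_limit_entry_power_prod_le:
  fixes M :: "real^'n^'n"
  assumes nonneg: "\<forall>i j. 0 \<le> M $ i $ j" and \<sigma>: "positive_diagonal M \<sigma>" and \<tau>: "\<tau> permutes UNIV"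
  shows "(\<Prod>i\<in>{i. \<tau> i \<noteq> \<sigma> i}. sinkhorn_limit uniform_marginal uniform_marginal (entry_power l M) $ i $ \<tau> i)
           \<le> (diag_prod M \<tau> / diag_prod M \<sigma>) powr l"
proof -
  note sinkhorn = uniform_sinkhorn_entry_power[OF nonneg \<sigma>, of l]
  define B where "B = sinkhorn_limit uniform_marginal uniform_marginal (entry_power l M)"
  define C where "C = {i. \<tau> i \<noteq> \<sigma> i}"
  have \<sigma>_perm: "\<sigma> permutes UNIV" and \<sigma>_pos: "\<And>i. 0 < M $ i $ \<sigma> i"
    using \<sigma> by (simp_all add: positive_diagonal_def)
  have "\<tau> ` (- C) = \<sigma> ` (- C)"
    unfolding C_def by (auto intro: image_cong)
  then have image: "\<tau> ` C = \<sigma> ` C"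
    using bij_image_Compl_eq[OF permutes_bij[OF \<tau>]] bij_image_Compl_eq[OF permutes_bij[OF \<sigma>_perm]]
    by (metis double_complement)
  define a b where "a = (\<Prod>i\<in>C. M $ i $ \<sigma> i)" and "b = (\<Prod>i\<in>C. M $ i $ \<tau> i)"
  have a: "0 < a" and b: "0 \<le> b"
    unfolding a_def b_def using \<sigma>_pos nonneg by (simp_all add: prod_pos prod_nonneg)
  have B: "0 \<le> B $ i $ j" "B $ i $ j \<le> 1" for i j
    using sinkhorn_limit_entry_power_uniform_coupling[OF nonneg \<sigma>] unfolding B_def
    by (simp_all add: uniform_coupling_le_one uniform_coupling_def)
  have "(\<Prod>i\<in>C. B $ i $ \<tau> i) * a powr l = (\<Prod>i\<in>C. B $ i $ \<sigma> i) * b powr l"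
    using uniform_sinkhorn.sinkhorn_limit_cycle_prod_eq[OF sinkhorn
        permutes_inj_on[OF \<tau>] permutes_inj_on[OF \<sigma>_perm] image]
    by (simp add: B_def a_def b_def entry_power_nth prod_powr_distrib)
  then have "(\<Prod>i\<in>C. B $ i $ \<tau> i) = (\<Prod>i\<in>C. B $ i $ \<sigma> i) * b powr l / a powr l"
    using a by (simp add: field_simps)
  also have "\<dots> \<le> b powr l / a powr l"
    using B by (intro divide_right_mono mult_left_le_one_le prod_nonneg prod_le_1) auto
  also have "\<dots> = (b / a) powr l"
    by (simp add: powr_divide)
  finally have bound: "(\<Prod>i\<in>C. B $ i $ \<tau> i) \<le> (b / a) powr l" .
  define c where "c = (\<Prod>i\<in>UNIV - C. M $ i $ \<sigma> i)"
  have split: "diag_prod M \<rho> = (\<Prod>i\<in>UNIV - C. M $ i $ \<rho> i) * (\<Prod>i\<in>C. M $ i $ \<rho> i)" for \<rho>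
    unfolding diag_prod_def by (rule prod.subset_diff) auto
  have "(\<Prod>i\<in>UNIV - C. M $ i $ \<tau> i) = c"
    unfolding c_def by (rule prod.cong) (auto simp: C_def)
  then have "diag_prod M \<tau> = c * b" and "diag_prod M \<sigma> = c * a"
    unfolding split[of \<tau>] split[of \<sigma>] a_def b_def c_def by simp_all
  moreover have "0 < c"
    unfolding c_def using \<sigma>_pos by (simp add: prod_pos)
  ultimately have "diag_prod M \<tau> / diag_prod M \<sigma> = b / a"
    by simp
  with bound show ?thesis
    unfolding B_def C_def by simp
qed

lemma sinkhorn_limit_entry_power_prod_tendsto_zero:
  fixes M :: "real^'n^'n"
  assumes nonneg: "\<forall>i j. 0 \<le> M $ i $ j" and \<sigma>: "positive_diagonal M \<sigma>" and \<tau>: "\<tau> permutes UNIV"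
    and less: "diag_prod M \<tau> < diag_prod M \<sigma>"
  shows "((\<lambda>l. \<Prod>i\<in>{i. \<tau> i \<noteq> \<sigma> i}.
              sinkhorn_limit uniform_marginal uniform_marginal (entry_power l M) $ i $ \<tau> i) \<longlongrightarrow> 0) at_top"
proof (rule tendsto_sandwich[OF _ _ tendsto_const powr_tendsto_zero_at_top])
  show "\<forall>\<^sub>F l in at_top. 0 \<le> (\<Prod>i\<in>{i. \<tau> i \<noteq> \<sigma> i}.
          sinkhorn_limit uniform_marginal uniform_marginal (entry_power l M) $ i $ \<tau> i)"
    using sinkhorn_limit_entry_power_uniform_coupling[OF nonneg \<sigma>]
    by (intro always_eventually allI prod_nonneg) (simp add: uniform_coupling_def)
  show "\<forall>\<^sub>F l in at_top. (\<Prod>i\<in>{i. \<tau> i \<noteq> \<sigma> i}.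
          sinkhorn_limit uniform_marginal uniform_marginal (entry_power l M) $ i $ \<tau> i)
          \<le> (diag_prod M \<tau> / diag_prod M \<sigma>) powr l"
    using sinkhorn_limit_entry_power_prod_le[OF nonneg \<sigma> \<tau>] by simp
  have "0 \<le> diag_prod M \<tau>"
    using nonneg by (simp add: diag_prod_def prod_nonneg)
  then show "0 \<le> diag_prod M \<tau> / diag_prod M \<sigma>" and "diag_prod M \<tau> / diag_prod M \<sigma> < 1"
    using less by simp_all
qed

lemma sinkhorn_limit_entry_power_limit_point_prod_eq_zero:
  fixes M :: "real^'n^'n"
  assumes "\<forall>i j. 0 \<le> M $ i $ j" and "positive_diagonal M \<sigma>" and "\<tau> permutes UNIV"
    and "diag_prod M \<tau> < diag_prod M \<sigma>" and ls: "filterlim ls at_top sequentially"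
    and lim: "(\<lambda>m. sinkhorn_limit uniform_marginal uniform_marginal (entry_power (ls m) M)) \<longlonglongrightarrow> L"
  shows "(\<Prod>i\<in>{i. \<tau> i \<noteq> \<sigma> i}. L $ i $ \<tau> i) = 0"
proof (rule LIMSEQ_unique)
  show "(\<lambda>m. \<Prod>i\<in>{i. \<tau> i \<noteq> \<sigma> i}.
          sinkhorn_limit uniform_marginal uniform_marginal (entry_power (ls m) M) $ i $ \<tau> i)
          \<longlonglongrightarrow> (\<Prod>i\<in>{i. \<tau> i \<noteq> \<sigma> i}. L $ i $ \<tau> i)"
    by (intro tendsto_prod tendsto_vec_nth lim)
  show "(\<lambda>m. \<Prod>i\<in>{i. \<tau> i \<noteq> \<sigma> i}.
          sinkhorn_limit uniform_marginal uniform_marginal (entry_power (ls m) M) $ i $ \<tau> i)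
          \<longlonglongrightarrow> 0"
    using sinkhorn_limit_entry_power_prod_tendsto_zero[OF assms(1-4)] ls by (rule filterlim_compose)
qed

theorem proposition5:
  fixes M :: "real^'n^'n" and s t :: 'n
  assumes nonneg: "\<forall>i j. M $ i $ j \<ge> 0"
    and posdiag: "\<exists>\<sigma>. positive_diagonal M \<sigma>"
    and not_leading: "\<not> (\<exists>\<sigma>. leading_diagonal M \<sigma> \<and> \<sigma> s = t)"
  shows "((\<lambda>l. sinkhorn_limit uniform_marginal uniform_marginal (entry_power l M) $ s $ t)
            \<longlongrightarrow> 0) at_top"
proof (rule ccontr)
  let ?B = "\<lambda>l. sinkhorn_limit uniform_marginal uniform_marginal (entry_power l M)"
  obtain \<sigma> where lead: "leading_diagonal M \<sigma>" and \<sigma>: "positive_diagonal M \<sigma>"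
    using exists_leading_positive_diagonal[OF nonneg posdiag] by blast
  assume "\<not> ((\<lambda>l. ?B l $ s $ t) \<longlongrightarrow> 0) at_top"
  then have "\<exists>ls L. filterlim ls at_top sequentially \<and> (\<lambda>m. ?B (ls m)) \<longlonglongrightarrow> L
               \<and> L \<in> Collect uniform_coupling \<and> L $ s $ t \<noteq> 0"
    using sinkhorn_limit_entry_power_uniform_coupling[OF nonneg \<sigma>]
    by (intro limit_point_of_not_tendsto_at_top compact_uniform_couplings continuous_intros) auto
  then obtain ls L where ls: "filterlim ls at_top sequentially" and lim: "(\<lambda>m. ?B (ls m)) \<longlonglongrightarrow> L"
    and L: "uniform_coupling L" and "0 < L $ s $ t"
    by (auto simp: uniform_coupling_def order_less_le)
  then obtain \<tau> where \<tau>: "\<tau> permutes UNIV" "\<tau> s = t" and pos: "\<forall>i. \<tau> i \<noteq> \<sigma> i \<longrightarrow> 0 < L $ i $ \<tau> i"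
    using uniform_coupling_diagonal_through[OF L] \<sigma> unfolding positive_diagonal_def by blast
  have "diag_prod M \<tau> < diag_prod M \<sigma>"
    using diag_prod_less_of_not_leading[OF lead \<tau>(1)] not_leading \<tau>(2) by blast
  with nonneg \<sigma> \<tau>(1) have "(\<Prod>i\<in>{i. \<tau> i \<noteq> \<sigma> i}. L $ i $ \<tau> i) = 0"
    using ls lim by (rule sinkhorn_limit_entry_power_limit_point_prod_eq_zero)
  moreover have "0 < (\<Prod>i\<in>{i. \<tau> i \<noteq> \<sigma> i}. L $ i $ \<tau> i)"
    using pos by (intro prod_pos) auto
  ultimately show False
    by linarith
qed

end
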